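(* Let $p$ be a prime, $G$ a finite Abelian $p$-group, and $\mathcal M\subset B(G\times C_p)$ the $\mathbb Z$-submodule generated by all Type 2 elements $B_{G',L}$ ($L<G'\le G$, $G'/L\cong C_p$). Then $\mathcal M\subset K(G\times C_p)$ and the kernel of the restriction $\sigma|_{\mathcal M}:\mathcal M\to B(G)$ equals $\mathcal M\cap K(G,C_p)$.
   Context: $B(\Pi)$ for Abelian $\Pi$ is the Burnside ring, free on subgroups. Subgroups of $G\times C_p$ are products $L\times C_p$ or graphs $K\times\rho=\{(k,\rho(k))\}$ ($\rho:K\to C_p$ a homomorphism, $K\le G$); $\epsilon$ is the trivial homomorphism. $B(G,C_p)$ is the span of graphs. $K(G\times C_p)$ is the kernel of $B(G\times C_p)\to R_{\mathbb Q}(G\times C_p)$, $S\mapsto[\mathbb Q[(G\times C_p)/S]]$, and $K(G,C_p)=K(G\times C_p)\cap B(G,C_p)$. Type 2 element: $B_{G',L}=L\times\epsilon-\sum_{\tilde\beta}G'\times\tilde\beta-L\times C_p+p\,(G'\times C_p)$, $\tilde\beta$ over homomorphisms $G'\to C_p$ trivial on $L$. The signature $\sigma:B(G\times C_p)\to B(G)$ sends $L\times C_p\mapsto L$ ($L\le G$) and every graph to $0$. *)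

theory Defs
  imports "HOL-Algebra.Algebra"
begin

abbreviation Cp :: "nat \<Rightarrow> int monoid" where
  "Cp p \<equiv> integer_mod_group p"

text \<open>Burnside ring B(P) of a finite Abelian group P: integer-valued functions on the set
  of subgroups (the free Z-module on the subgroups; coefficient of S is x S).\<close>
definition burnside :: "'b monoid \<Rightarrow> ('b set \<Rightarrow> int) set" where
  "burnside P = {x. \<forall>S. x S \<noteq> 0 \<longrightarrow> subgroup S P}"

definition bas :: "'b set \<Rightarrow> ('b set \<Rightarrow> int)" where
  "bas S = (\<lambda>T. if T = S then 1 else 0)"

text \<open>Character of the permutation representation Q[P/S] at g: the number of cosets
  of S fixed by g.\<close>
definition perm_char :: "'b monoid \<Rightarrow> 'b set \<Rightarrow> 'b \<Rightarrow> nat" where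
  "perm_char P S g = card {C \<in> rcosets\<^bsub>P\<^esub> S. C #>\<^bsub>P\<^esub> g = C}"

text \<open>K(P): kernel of B(P) -> R_Q(P), S |-> [Q[P/S]]. A virtual rational representation
  is zero iff its character vanishes.\<close>
definition Kker :: "'b monoid \<Rightarrow> ('b set \<Rightarrow> int) set" where
  "Kker P = {x \<in> burnside P. \<forall>g \<in> carrier P.
      (\<Sum>S \<in> {S. subgroup S P}. x S * int (perm_char P S g)) = 0}"

definition graph_sg :: "'a set \<Rightarrow> ('a \<Rightarrow> int) \<Rightarrow> ('a \<times> int) set" where
  "graph_sg K rho = {(k, rho k) | k. k \<in> K}"

definition is_graph :: "'a monoid \<Rightarrow> nat \<Rightarrow> ('a \<times> int) set \<Rightarrow> bool" where
  "is_graph G p H \<longleftrightarrow> (\<exists>K rho. subgroup K G \<and> rho \<in> hom (G\<lparr>carrier := K\<rparr>) (Cp p)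
                         \<and> H = graph_sg K rho)"

definition BGC :: "'a monoid \<Rightarrow> nat \<Rightarrow> (('a \<times> int) set \<Rightarrow> int) set" where
  "BGC G p = {x \<in> burnside (G \<times>\<times> Cp p). \<forall>H. x H \<noteq> 0 \<longrightarrow> is_graph G p H}"

definition KGC :: "'a monoid \<Rightarrow> nat \<Rightarrow> (('a \<times> int) set \<Rightarrow> int) set" where
  "KGC G p = Kker (G \<times>\<times> Cp p) \<inter> BGC G p"

definition homs_triv :: "'a monoid \<Rightarrow> nat \<Rightarrow> 'a set \<Rightarrow> 'a set \<Rightarrow> ('a \<Rightarrow> int) set" where
  "homs_triv G p G' L = {rho \<in> hom (G\<lparr>carrier := G'\<rparr>) (Cp p) \<inter> extensional G'.
                          \<forall>l \<in> L. rho l = 0}"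

definition type2 :: "'a monoid \<Rightarrow> nat \<Rightarrow> 'a set \<Rightarrow> 'a set \<Rightarrow> (('a \<times> int) set \<Rightarrow> int)" where
  "type2 G p G' L = (\<lambda>H.
      bas (graph_sg L (\<lambda>_. 0)) H
    - (\<Sum>rho \<in> homs_triv G p G' L. bas (graph_sg G' rho) H)
    - bas (L \<times> carrier (Cp p)) H
    + int p * bas (G' \<times> carrier (Cp p)) H)"

inductive_set zspan :: "('b \<Rightarrow> int) set \<Rightarrow> ('b \<Rightarrow> int) set" for A where
  zero: "(\<lambda>_. 0) \<in> zspan A"
| gen: "v \<in> A \<Longrightarrow> v \<in> zspan A"
| add: "x \<in> zspan A \<Longrightarrow> y \<in> zspan A \<Longrightarrow> (\<lambda>H. x H + y H) \<in> zspan A"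
| neg: "x \<in> zspan A \<Longrightarrow> (\<lambda>H. - x H) \<in> zspan A"

text \<open>The signature sigma: L x C_p |-> L, graphs |-> 0.\<close>
definition sigma :: "'a monoid \<Rightarrow> nat \<Rightarrow> (('a \<times> int) set \<Rightarrow> int) \<Rightarrow> ('a set \<Rightarrow> int)" where
  "sigma G p x = (\<lambda>L. if subgroup L G then x (L \<times> carrier (Cp p)) else 0)"

definition type2_module :: "'a monoid \<Rightarrow> nat \<Rightarrow> (('a \<times> int) set \<Rightarrow> int) set" where
  "type2_module G p = zspan {type2 G p G' L | G' L.
      subgroup G' G \<and> subgroup L G \<and> L \<subset> G' \<and>
      (G\<lparr>carrier := G'\<rparr>) Mod L \<cong> Cp p}"

end

theory Submission
  imports Defs
begin

(* Put P = G \<times> C_p. As P is abelian, g fixes a coset of S iff g \<in> S, so the character of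
   Q[P/S] is [P:S] on S and 0 elsewhere. The indices of the subgroups occurring in B_{G',L} are
   fixed multiples of r = [P : L \<times> C_p], and the character of B_{G',L} at (a, c) comes out as
   r (p[a \<in> L, c = 0] - #{\<beta> : a \<in> G', \<beta>(a) = c} - [a \<in> L] + [a \<in> G']).
   The homomorphisms G' \<rightarrow> C_p trivial on L are the p multiples of the projection
   G' \<rightarrow> G'/L \<cong> C_p, so the count is p[c = 0] on L and 1 on G' - L, and the character vanishes.
   For the second claim: elements of the span are supported on graphs and on products L \<times> C_p,
   \<sigma> reads off the coefficients of the products, and a product is never a graph. *)

lemma comm_group_DirProd:
  assumes "comm_group G" "comm_group H"
  shows "comm_group (G \<times>\<times> H)"
  by (rule group.group_comm_groupI[OF DirProd_group])
    (use assms in \<open>auto simp: comm_group_def comm_monoid.m_comm\<close>)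

lemma comm_group_subgroup:
  assumes "comm_group G" "subgroup H G"
  shows "comm_group (G\<lparr>carrier := H\<rparr>)"
  by (rule group.group_comm_groupI[OF subgroup.subgroup_is_group[OF assms(2)]])
    (use assms in \<open>auto simp: comm_group_def comm_monoid.m_comm subgroup.mem_carrier\<close>)

lemma (in group) card_rcosets_eq_mult:
  assumes "finite (carrier G)" "subgroup H G" "subgroup K G" "card K = m * card H"
  shows "card (rcosets H) = m * card (rcosets K)"
proof -
  have "card H > 0"
    using assms(1,2) subgroup.one_closed[OF assms(2)] subgroup.subset[OF assms(2)]
    by (metis card_gt_0_iff empty_iff finite_subset)
  moreover have "card (rcosets H) * card H = card (rcosets K) * card K"
    using lagrange[OF assms(2)] lagrange[OF assms(3)] by simp
  ultimately show ?thesis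
    using assms(4) by simp
qed

lemma (in comm_group) rcos_fixed_iff:
  assumes S: "subgroup S G" and g: "g \<in> carrier G" and C: "C \<in> rcosets S"
  shows "C #> g = C \<longleftrightarrow> g \<in> S"
proof -
  obtain h where h: "h \<in> carrier G" "C = S #> h"
    using C unfolding RCOSETS_def by blast
  have sub: "S \<subseteq> carrier G" "S #> g \<subseteq> carrier G"
    using S g subgroup.subset r_coset_subset_G by blast+
  have "C #> g = (S #> g) #> h"
    using h g sub by (simp add: coset_mult_assoc m_comm)
  also have "\<dots> = S #> h \<longleftrightarrow> S #> g = S"
    using h sub by (metis coset_mult_assoc coset_mult_one inv_closed r_inv)
  also have "\<dots> \<longleftrightarrow> g \<in> S"
    using S g coset_join1 coset_join2 by blast
  finally show ?thesis
    using h by simp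
qed

lemma perm_char_comm_group:
  assumes "comm_group P" "subgroup S P" "g \<in> carrier P"
  shows "perm_char P S g = (if g \<in> S then card (rcosets\<^bsub>P\<^esub> S) else 0)"
proof -
  have "{C \<in> rcosets\<^bsub>P\<^esub> S. C #>\<^bsub>P\<^esub> g = C}
      = (if g \<in> S then rcosets\<^bsub>P\<^esub> S else {})"
    using comm_group.rcos_fixed_iff[OF assms] by auto
  then show ?thesis
    by (simp add: perm_char_def)
qed

lemma mem_graph_sg [simp]: "(k, c) \<in> graph_sg K rho \<longleftrightarrow> k \<in> K \<and> c = rho k"
  by (auto simp: graph_sg_def)

lemma graph_sg_eq_image: "graph_sg K rho = (\<lambda>k. (k, rho k)) ` K"
  by (auto simp: graph_sg_def)

lemma card_graph_sg: "card (graph_sg K rho) = card K"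
  by (simp add: graph_sg_eq_image card_image inj_on_def)

lemma subgroup_graph_sg:
  assumes "group G" "subgroup K G" "rho \<in> hom (G\<lparr>carrier := K\<rparr>) (Cp p)"
  shows "subgroup (graph_sg K rho) (G \<times>\<times> Cp p)"
proof -
  have "(\<lambda>k. (k, rho k)) \<in> hom (G\<lparr>carrier := K\<rparr>) (G \<times>\<times> Cp p)"
    using assms(2,3) by (auto simp: hom_paired hom_def subgroup.mem_carrier)
  then have "group_hom (G\<lparr>carrier := K\<rparr>) (G \<times>\<times> Cp p) (\<lambda>k. (k, rho k))"
    using assms by (simp add: group_hom_def group_hom_axioms_def DirProd_group subgroup.subgroup_is_group)
  then show ?thesis
    using group_hom.img_is_subgroup by (fastforce simp: graph_sg_eq_image)
qed

lemma times_carrier_not_graph: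
  assumes "Factorial_Ring.prime p" "subgroup K G"
  shows "\<not> is_graph G p (K \<times> carrier (Cp p))"
proof
  assume "is_graph G p (K \<times> carrier (Cp p))"
  then obtain K' rho where eq: "K \<times> carrier (Cp p) = graph_sg K' rho"
    unfolding is_graph_def by auto
  have "(\<one>\<^bsub>G\<^esub>, 0) \<in> graph_sg K' rho" "(\<one>\<^bsub>G\<^esub>, 1) \<in> graph_sg K' rho"
    using eq[symmetric] subgroup.one_closed[OF assms(2)] assms(1) by auto
  then show False
    by simp
qed

lemma sum_bas_mult:
  assumes "finite A" "T \<in> A"
  shows "(\<Sum>S\<in>A. bas T S * f S) = f T"
proof -
  have "(\<Sum>S\<in>A. bas T S * f S) = (\<Sum>S\<in>A. if S = T then f S else 0)"
    by (intro sum.cong) (simp_all add: bas_def)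
  with assms show ?thesis
    by simp
qed

lemma type2_pairing:
  assumes "finite A" "graph_sg L (\<lambda>_. 0) \<in> A"
    and "L \<times> carrier (Cp p) \<in> A" "G' \<times> carrier (Cp p) \<in> A"
    and "\<And>rho. rho \<in> homs_triv G p G' L \<Longrightarrow> graph_sg G' rho \<in> A"
  shows "(\<Sum>S\<in>A. type2 G p G' L S * f S)
    = f (graph_sg L (\<lambda>_. 0)) - (\<Sum>rho\<in>homs_triv G p G' L. f (graph_sg G' rho))
      - f (L \<times> carrier (Cp p)) + int p * f (G' \<times> carrier (Cp p))"
proof -
  let ?T = "homs_triv G p G' L"
  have "(\<Sum>S\<in>A. type2 G p G' L S * f S)
    = (\<Sum>S\<in>A. bas (graph_sg L (\<lambda>_. 0)) S * f S)
      - (\<Sum>S\<in>A. \<Sum>rho\<in>?T. bas (graph_sg G' rho) S * f S)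
      - (\<Sum>S\<in>A. bas (L \<times> carrier (Cp p)) S * f S)
      + int p * (\<Sum>S\<in>A. bas (G' \<times> carrier (Cp p)) S * f S)"
    by (simp add: type2_def algebra_simps sum.distrib sum_subtractf sum_distrib_left sum_distrib_right)
  also have "(\<Sum>S\<in>A. \<Sum>rho\<in>?T. bas (graph_sg G' rho) S * f S)
      = (\<Sum>rho\<in>?T. f (graph_sg G' rho))"
    by (subst sum.swap) (auto intro!: sum.cong sum_bas_mult assms)
  finally show ?thesis
    using assms(1-4) by (simp add: sum_bas_mult)
qed

lemma type2_support:
  assumes "type2 G p G' L H \<noteq> 0"
  shows "H = graph_sg L (\<lambda>_. 0) \<or> H = L \<times> carrier (Cp p) \<or> H = G' \<times> carrier (Cp p)
    \<or> (\<exists>rho \<in> homs_triv G p G' L. H = graph_sg G' rho)"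
proof (rule ccontr)
  assume "\<not> ?thesis"
  moreover from this have "(\<Sum>rho \<in> homs_triv G p G' L. bas (graph_sg G' rho) H) = 0"
    by (intro sum.neutral) (auto simp: bas_def)
  ultimately show False
    using assms by (simp add: type2_def bas_def)
qed

lemma card_linear_mod_solutions:
  fixes d c m :: int
  assumes "coprime d m" and "c \<in> {0..<m}"
  shows "card {k \<in> {0..<m}. d * k mod m = c} = 1"
proof -
  obtain u v where "u * d + v * m = 1"
    using bezout_int[of d m] assms(1) by auto
  then have inv: "d * u mod m = 1 mod m"
    by (metis add.commute mod_mult_self3 mult.commute)
  have unit: "d * u * k mod m = k mod m" for k
    by (metis inv mod_mult_left_eq mult_1)
  have "{k \<in> {0..<m}. d * k mod m = c} = {c * u mod m}"
  proof (intro equalityI subsetI)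
    fix k assume k: "k \<in> {k \<in> {0..<m}. d * k mod m = c}"
    then have "k = d * u * k mod m"
      by (simp add: unit)
    also have "\<dots> = (d * k mod m) * u mod m"
      by (simp add: mod_mult_right_eq ac_simps)
    finally show "k \<in> {c * u mod m}" using k by simp
  next
    fix k assume "k \<in> {c * u mod m}"
    moreover have "d * (c * u mod m) mod m = d * u * c mod m"
      by (simp add: mod_mult_right_eq ac_simps)
    ultimately show "k \<in> {k \<in> {0..<m}. d * k mod m = c}"
      using assms(2) by (simp add: unit)
  qed
  then show ?thesis by simp
qed

locale cyclic_quotient = comm_group H + subgroup L H
  for H :: "'a monoid" (structure) and L +
  fixes p :: nat and phi
  assumes prime: "Factorial_Ring.prime p"
    and phi_iso: "phi \<in> iso (H Mod L) (Cp p)"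
begin

definition proj :: "'a \<Rightarrow> int" where
  "proj = phi \<circ> (\<lambda>x. L #> x)"

lemma p_pos: "int p > 0"
  using prime prime_gt_0_nat by simp

lemma Cp_carrier: "carrier (Cp p) = {0..<int p}"
  using p_pos by (simp add: carrier_integer_mod_group)

lemma normal_L: "L \<lhd> H"
  by (simp add: subgroup_axioms subgroup_imp_normal)

lemma proj_hom: "proj \<in> hom H (Cp p)"
  unfolding proj_def
  by (rule Group.hom_compose[OF normal.r_coset_hom_Mod[OF normal_L] iso_imp_homomorphism[OF phi_iso]])

lemma proj_range: "x \<in> carrier H \<Longrightarrow> proj x \<in> {0..<int p}"
  using proj_hom Cp_carrier by (auto simp: hom_def)

lemma proj_eq_0_iff:
  assumes "x \<in> carrier H"
  shows "proj x = 0 \<longleftrightarrow> x \<in> L"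
proof -
  have "phi L = 0"
    using hom_one[OF iso_imp_homomorphism[OF phi_iso] normal.factorgroup_is_group[OF normal_L]]
    by (simp add: FactGroup_def)
  moreover have "inj_on phi (carrier (H Mod L))"
    using phi_iso by (simp add: iso_iff)
  moreover have "L #> x \<in> carrier (H Mod L)" "L \<in> carrier (H Mod L)"
    using assms coset_mult_one[OF subset, symmetric] by (auto simp: FactGroup_def RCOSETS_def)
  ultimately have "proj x = 0 \<longleftrightarrow> L #> x = L"
    unfolding proj_def comp_def by (metis inj_onD)
  also have "\<dots> \<longleftrightarrow> x \<in> L"
    using assms rcos_const rcos_self[OF assms subgroup_axioms] by auto
  finally show ?thesis .
qed

lemma ex_proj_eq_1: "\<exists>a \<in> carrier H. proj a = 1"
proof -
  have "1 \<in> phi ` carrier (H Mod L)"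
    using phi_iso prime prime_gt_1_nat by (auto simp: iso_iff)
  then show ?thesis
    unfolding proj_def by (auto simp: FactGroup_def RCOSETS_def)
qed

lemma hom_eq_proj_times:
  assumes rho: "rho \<in> hom H (Cp p)" "\<forall>l\<in>L. rho l = 0"
    and x: "x \<in> carrier H" and a: "a \<in> carrier H" "proj a = 1"
  shows "rho x = proj x * rho a mod int p"
proof -
  interpret proj: group_hom H "Cp p" proj
    by (simp add: group_hom_def group_hom_axioms_def proj_hom is_group)
  define m where "m = nat (proj x)"
  have m: "proj x = int m" "m < p"
    using proj_range[OF x] by (auto simp: m_def)
  have am: "a [^] m \<in> carrier H"
    using a by simp
  have proj_am: "proj (a [^] m) = int m"
    using proj.hom_nat_pow[OF a(1)] a m by simp
  define y where "y = x \<otimes> inv (a [^] m)"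
  have y: "y \<in> carrier H" and x_eq: "x = y \<otimes> a [^] m"
    using x am by (simp_all add: y_def m_assoc)
  have "proj y = 0"
    using x am by (simp add: y_def proj_am m Cp_carrier mod_add_right_eq)
  then have "y \<in> L"
    using proj_eq_0_iff[OF y] by simp
  have rho_range: "rho z \<in> {0..<int p}" if "z \<in> carrier H" for z
    using rho(1) that Cp_carrier by (auto simp: hom_def)
  have "rho x = (rho y + rho (a [^] m)) mod int p"
    using hom_mult[OF rho(1) y am] x_eq by simp
  also have "\<dots> = rho (a [^] m)"
    using rho(2) \<open>y \<in> L\<close> rho_range[OF am] by simp
  also have "\<dots> = int m * rho a mod int p"
    using hom_nat_pow[OF rho(1) a(1) is_group] rho_range[OF a(1)] Cp_carrier by simp
  finally show ?thesis
    using m by (simp add: mult.commute)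
qed

definition proj_scaled :: "int \<Rightarrow> 'a \<Rightarrow> int" where
  "proj_scaled k = (\<lambda>x\<in>carrier H. proj x * k mod int p)"

lemma proj_scaled_mem_homs_triv: "proj_scaled k \<in> homs_triv H p (carrier H) L"
proof -
  have "proj_scaled k \<in> hom H (Cp p)"
  proof (rule homI)
    fix x y assume "x \<in> carrier H" "y \<in> carrier H"
    then show "proj_scaled k (x \<otimes> y) = proj_scaled k x \<otimes>\<^bsub>Cp p\<^esub> proj_scaled k y"
      using hom_mult[OF proj_hom]
      by (simp add: proj_scaled_def mod_mult_left_eq mod_add_eq distrib_right)
  qed (use p_pos in \<open>simp add: proj_scaled_def Cp_carrier\<close>)
  moreover have "proj_scaled k l = 0" if "l \<in> L" for l
    using that subset proj_eq_0_iff[of l] by (auto simp: proj_scaled_def)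
  ultimately show ?thesis
    by (simp add: homs_triv_def proj_scaled_def)
qed

lemma homs_triv_eq_image: "homs_triv H p (carrier H) L = proj_scaled ` {0..<int p}"
proof (intro equalityI subsetI)
  fix rho assume rho: "rho \<in> homs_triv H p (carrier H) L"
  obtain a where a: "a \<in> carrier H" "proj a = 1"
    using ex_proj_eq_1 by blast
  have "rho a \<in> {0..<int p}"
    using rho a(1) Cp_carrier by (auto simp: homs_triv_def hom_def)
  moreover have "rho = proj_scaled (rho a)"
    unfolding proj_scaled_def
    by (rule extensionalityI[where A = "carrier H"])
      (use rho hom_eq_proj_times[OF _ _ _ a] in \<open>auto simp: homs_triv_def\<close>)
  ultimately show "rho \<in> proj_scaled ` {0..<int p}"
    by blast
qed (auto intro: proj_scaled_mem_homs_triv)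

lemma inj_on_proj_scaled: "inj_on proj_scaled {0..<int p}"
proof (rule inj_onI)
  obtain a where a: "a \<in> carrier H" "proj a = 1"
    using ex_proj_eq_1 by blast
  fix k k' assume "k \<in> {0..<int p}" "k' \<in> {0..<int p}" "proj_scaled k = proj_scaled k'"
  then have "proj_scaled k a = proj_scaled k' a"
    by simp
  with \<open>k \<in> {0..<int p}\<close> \<open>k' \<in> {0..<int p}\<close> show "k = k'"
    using a by (simp add: proj_scaled_def)
qed

lemma finite_homs_triv: "finite (homs_triv H p (carrier H) L)"
  by (simp add: homs_triv_eq_image)

lemma card_homs_triv_value:
  assumes x: "x \<in> carrier H" and c: "c \<in> {0..<int p}"
  shows "card {rho \<in> homs_triv H p (carrier H) L. rho x = c}
    = (if x \<in> L then if c = 0 then p else 0 else 1)"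
proof -
  let ?K = "{k \<in> {0..<int p}. proj x * k mod int p = c}"
  have "{rho \<in> homs_triv H p (carrier H) L. rho x = c} = proj_scaled ` ?K"
    using x by (auto simp: homs_triv_eq_image proj_scaled_def)
  moreover have "inj_on proj_scaled ?K"
    by (rule inj_on_subset[OF inj_on_proj_scaled]) auto
  ultimately have card_eq: "card {rho \<in> homs_triv H p (carrier H) L. rho x = c} = card ?K"
    by (simp add: card_image)
  show ?thesis
  proof (cases "x \<in> L")
    case True
    then have "proj x = 0"
      using proj_eq_0_iff[OF x] by simp
    then have "?K = (if c = 0 then {0..<int p} else {})"
      using c by auto
    then have "card ?K = (if c = 0 then p else 0)"
      by simp
    with True card_eq show ?thesis
      by simp
  next
    case False
    then have d: "0 < proj x" "proj x < int p"
      using proj_range[OF x] proj_eq_0_iff[OF x] by auto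
    have "Factorial_Ring.prime (int p)"
      using prime by simp
    then have "coprime (proj x) (int p)"
      using d by (simp add: prime_imp_coprime coprime_commute zdvd_not_zless)
    then have "card ?K = 1"
      using c by (rule card_linear_mod_solutions)
    with False card_eq show ?thesis
      by simp
  qed
qed

lemma card_carrier: "card (carrier H) = p * card L"
proof -
  have "H Mod L \<cong> Cp p"
    using phi_iso by (auto simp: is_iso_def)
  then have "card (carrier (H Mod L)) = card (carrier (Cp p))"
    by (rule iso_same_card)
  then have "card (rcosets L) = p"
    by (simp add: FactGroup_def Cp_carrier)
  then show ?thesis
    using lagrange[OF subgroup_axioms] by (simp add: order_def)
qed

end

locale type2_setting = comm_group G
  for G :: "'a monoid" (structure) +
  fixes p :: nat and G' L :: "'a set" and phi
  assumes finite_carrier: "finite (carrier G)"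
    and subgroup_G': "subgroup G' G" and subgroup_L: "subgroup L G" and L_subset: "L \<subseteq> G'"
    and prime: "Factorial_Ring.prime p"
    and phi_iso: "phi \<in> iso (G\<lparr>carrier := G'\<rparr> Mod L) (Cp p)"
begin

sublocale quot: cyclic_quotient "G\<lparr>carrier := G'\<rparr>" L p phi
  using comm_group_subgroup[OF comm_group_axioms subgroup_G']
    subgroup_incl[OF subgroup_L subgroup_G' L_subset] prime phi_iso
  by (simp add: cyclic_quotient_def cyclic_quotient_axioms_def)

lemma homs_triv_restrict:
  "homs_triv G p G' L = homs_triv (G\<lparr>carrier := G'\<rparr>) p (carrier (G\<lparr>carrier := G'\<rparr>)) L"
  by (simp add: homs_triv_def)

lemma comm_group_P: "comm_group (G \<times>\<times> Cp p)"
  by (simp add: comm_group_DirProd comm_group_axioms)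

lemma finite_subgroups_P: "finite {S. subgroup S (G \<times>\<times> Cp p)}"
proof (rule finite_subset)
  show "{S. subgroup S (G \<times>\<times> Cp p)} \<subseteq> Pow (carrier (G \<times>\<times> Cp p))"
    using subgroup.subset by blast
  show "finite (Pow (carrier (G \<times>\<times> Cp p)))"
    using finite_carrier quot.Cp_carrier by simp
qed

lemma subgroup_times_Cp: "subgroup K G \<Longrightarrow> subgroup (K \<times> carrier (Cp p)) (G \<times>\<times> Cp p)"
  by (simp add: DirProd_subgroups group.subgroup_self is_group)

lemma subgroup_graph_L: "subgroup (graph_sg L (\<lambda>_. 0)) (G \<times>\<times> Cp p)"
  by (rule subgroup_graph_sg[OF is_group subgroup_L]) (simp add: hom_def)

lemma subgroup_graph_G':
  "rho \<in> homs_triv G p G' L \<Longrightarrow> subgroup (graph_sg G' rho) (G \<times>\<times> Cp p)"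
  by (rule subgroup_graph_sg[OF is_group subgroup_G']) (simp add: homs_triv_def)

definition index :: "('a \<times> int) set \<Rightarrow> nat" where
  "index S = card (rcosets\<^bsub>G \<times>\<times> Cp p\<^esub> S)"

lemma index_scale:
  assumes "subgroup S (G \<times>\<times> Cp p)" "subgroup S' (G \<times>\<times> Cp p)" "card S' = m * card S"
  shows "index S = m * index S'"
  unfolding index_def
  by (rule group.card_rcosets_eq_mult[OF DirProd_group[OF is_group group_integer_mod_group] _ assms])
    (use finite_carrier quot.Cp_carrier in simp)

lemma card_G': "card G' = p * card L"
  using quot.card_carrier by simp

lemma card_Cp: "card (carrier (Cp p)) = p"
  by (simp add: quot.Cp_carrier)

lemma index_graph_L: "index (graph_sg L (\<lambda>_. 0)) = p * index (L \<times> carrier (Cp p))"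
  by (rule index_scale[OF subgroup_graph_L subgroup_times_Cp[OF subgroup_L]])
    (simp add: card_graph_sg card_cartesian_product card_Cp)

lemma index_graph_G':
  "rho \<in> homs_triv G p G' L \<Longrightarrow> index (graph_sg G' rho) = index (L \<times> carrier (Cp p))"
  using index_scale[OF subgroup_graph_G' subgroup_times_Cp[OF subgroup_L], of rho 1]
  by (simp add: card_graph_sg card_cartesian_product card_Cp card_G')

lemma index_G'_times: "index (L \<times> carrier (Cp p)) = p * index (G' \<times> carrier (Cp p))"
  by (rule index_scale[OF subgroup_times_Cp[OF subgroup_L] subgroup_times_Cp[OF subgroup_G']])
    (simp add: card_cartesian_product card_Cp card_G')

lemma type2_in_burnside: "type2 G p G' L \<in> burnside (G \<times>\<times> Cp p)"
  unfolding burnside_def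
  using type2_support subgroup_graph_L subgroup_times_Cp subgroup_L subgroup_G' subgroup_graph_G'
  by blast

lemma type2_character_vanishes:
  assumes "g \<in> carrier (G \<times>\<times> Cp p)"
  shows "(\<Sum>S\<in>{S. subgroup S (G \<times>\<times> Cp p)}.
      type2 G p G' L S * int (perm_char (G \<times>\<times> Cp p) S g)) = 0"
proof -
  obtain a c where g: "g = (a, c)" and c: "c \<in> {0..<int p}"
    using assms quot.Cp_carrier by auto
  let ?T = "homs_triv G p G' L"
  define r where "r = index (L \<times> carrier (Cp p))"
  define f where "f S = int (perm_char (G \<times>\<times> Cp p) S g)" for S
  have f: "f S = (if g \<in> S then int (index S) else 0)" if "subgroup S (G \<times>\<times> Cp p)" for S
    using perm_char_comm_group[OF comm_group_P that assms] by (simp add: f_def index_def)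
  have "(\<Sum>rho\<in>?T. f (graph_sg G' rho)) = (\<Sum>rho\<in>?T. if a \<in> G' \<and> rho a = c then int r else 0)"
    using f subgroup_graph_G' index_graph_G' by (intro sum.cong) (auto simp: g r_def)
  also have "\<dots> = int r * int (card {rho \<in> ?T. a \<in> G' \<and> rho a = c})"
    using quot.finite_homs_triv by (simp add: sum.inter_filter[symmetric] homs_triv_restrict)
  finally have graphs_G': "(\<Sum>rho\<in>?T. f (graph_sg G' rho)) = \<dots>" .
  have graph_L: "f (graph_sg L (\<lambda>_. 0)) = of_bool (a \<in> L \<and> c = 0) * int p * int r"
    using f[OF subgroup_graph_L] index_graph_L by (simp add: g r_def)
  have L_times: "f (L \<times> carrier (Cp p)) = of_bool (a \<in> L) * int r"
    using f[OF subgroup_times_Cp[OF subgroup_L]] c by (simp add: g r_def quot.Cp_carrier)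
  have G'_times: "int p * f (G' \<times> carrier (Cp p)) = of_bool (a \<in> G') * int r"
    using f[OF subgroup_times_Cp[OF subgroup_G']] index_G'_times c by (simp add: g r_def quot.Cp_carrier)
  have "(\<Sum>S\<in>{S. subgroup S (G \<times>\<times> Cp p)}. type2 G p G' L S * f S)
    = f (graph_sg L (\<lambda>_. 0)) - (\<Sum>rho\<in>?T. f (graph_sg G' rho))
      - f (L \<times> carrier (Cp p)) + int p * f (G' \<times> carrier (Cp p))"
    using finite_subgroups_P subgroup_graph_L subgroup_times_Cp subgroup_L subgroup_G' subgroup_graph_G'
    by (intro type2_pairing) auto
  also have "\<dots> = int r * (of_bool (a \<in> L \<and> c = 0) * int p
      - int (card {rho \<in> ?T. a \<in> G' \<and> rho a = c}) - of_bool (a \<in> L) + of_bool (a \<in> G'))"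
    by (simp only: graph_L graphs_G' L_times G'_times) (simp add: algebra_simps)
  also have "\<dots> = 0"
    using quot.card_homs_triv_value[of a c] c L_subset by (auto simp: homs_triv_restrict)
  finally show ?thesis
    by (simp add: f_def)
qed

end

lemma type2_in_Kker:
  assumes "Factorial_Ring.prime p" "comm_group G" "finite (carrier G)"
    and "subgroup G' G" "subgroup L G" "L \<subseteq> G'" "G\<lparr>carrier := G'\<rparr> Mod L \<cong> Cp p"
  shows "type2 G p G' L \<in> Kker (G \<times>\<times> Cp p)"
proof -
  obtain phi where "phi \<in> iso (G\<lparr>carrier := G'\<rparr> Mod L) (Cp p)"
    using assms(7) by (auto simp: is_iso_def)
  with assms interpret type2_setting G p G' L phi
    by (simp add: type2_setting_def type2_setting_axioms_def)
  show ?thesis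
    using type2_in_burnside type2_character_vanishes by (simp add: Kker_def)
qed

lemma Kker_zero: "(\<lambda>_. 0) \<in> Kker P"
  by (simp add: Kker_def burnside_def)

lemma Kker_add: "x \<in> Kker P \<Longrightarrow> y \<in> Kker P \<Longrightarrow> (\<lambda>H. x H + y H) \<in> Kker P"
  unfolding Kker_def burnside_def
  by (auto simp: distrib_right sum.distrib) (metis add.right_neutral)

lemma Kker_neg: "x \<in> Kker P \<Longrightarrow> (\<lambda>H. - x H) \<in> Kker P"
  by (auto simp: Kker_def burnside_def sum_negf)

lemma zspan_subset_Kker:
  assumes "A \<subseteq> Kker P"
  shows "zspan A \<subseteq> Kker P"
proof
  fix x assume "x \<in> zspan A"
  then show "x \<in> Kker P"
    by induction (use assms Kker_zero Kker_add Kker_neg in auto)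
qed

lemma zspan_support: "x \<in> zspan A \<Longrightarrow> x H \<noteq> 0 \<Longrightarrow> \<exists>v\<in>A. v H \<noteq> 0"
  by (induction rule: zspan.induct) (auto, metis add.left_neutral)

lemma type2_module_support:
  assumes "x \<in> type2_module G p" "x H \<noteq> 0"
  shows "is_graph G p H \<or> (\<exists>K. subgroup K G \<and> H = K \<times> carrier (Cp p))"
proof -
  obtain G' L where G': "subgroup G' G" and L: "subgroup L G" and "type2 G p G' L H \<noteq> 0"
    using zspan_support[OF assms[unfolded type2_module_def]] by blast
  then consider "H = graph_sg L (\<lambda>_. 0)" | "H = L \<times> carrier (Cp p)" | "H = G' \<times> carrier (Cp p)"
    | rho where "rho \<in> homs_triv G p G' L" "H = graph_sg G' rho"
    using type2_support by blast
  then show ?thesis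
  proof cases
    case 1
    have "(\<lambda>_. 0) \<in> hom (G\<lparr>carrier := L\<rparr>) (Cp p)"
      by (simp add: hom_def)
    with 1 L show ?thesis
      unfolding is_graph_def by blast
  next
    case 4
    with G' show ?thesis
      unfolding is_graph_def homs_triv_def by blast
  qed (use G' L in blast)+
qed

lemma sigma_eq_0_iff_BGC:
  assumes "Factorial_Ring.prime p" "x \<in> burnside (G \<times>\<times> Cp p)"
    and "\<And>H. x H \<noteq> 0 \<Longrightarrow>
      is_graph G p H \<or> (\<exists>K. subgroup K G \<and> H = K \<times> carrier (Cp p))"
  shows "sigma G p x = (\<lambda>_. 0) \<longleftrightarrow> x \<in> BGC G p"
proof
  assume sigma_0: "sigma G p x = (\<lambda>_. 0)"
  have "x (K \<times> carrier (Cp p)) = 0" if "subgroup K G" for K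
    using that fun_cong[OF sigma_0, of K] by (simp add: sigma_def)
  then show "x \<in> BGC G p"
    using assms(2,3) by (auto simp: BGC_def)
next
  assume "x \<in> BGC G p"
  then show "sigma G p x = (\<lambda>_. 0)"
    using times_carrier_not_graph[OF assms(1)] by (auto simp: BGC_def sigma_def fun_eq_iff)
qed

theorem corollary7p3:
  fixes G :: "'a monoid" and p :: nat
  assumes "Factorial_Ring.prime p" and "comm_group G" and "finite (carrier G)"
    and "\<exists>n. card (carrier G) = p ^ n"
  shows "type2_module G p \<subseteq> Kker (G \<times>\<times> Cp p)
    \<and> {x \<in> type2_module G p. sigma G p x = (\<lambda>_. 0)} = type2_module G p \<inter> KGC G p"
proof -
  have M_Kker: "type2_module G p \<subseteq> Kker (G \<times>\<times> Cp p)"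
    unfolding type2_module_def
    by (rule zspan_subset_Kker) (use type2_in_Kker[OF assms(1-3)] in auto)
  have "sigma G p x = (\<lambda>_. 0) \<longleftrightarrow> x \<in> BGC G p" if "x \<in> type2_module G p" for x
  proof (rule sigma_eq_0_iff_BGC[OF assms(1)])
    show "x \<in> burnside (G \<times>\<times> Cp p)"
      using M_Kker that unfolding Kker_def by blast
  qed (use type2_module_support that in blast)
  with M_Kker show ?thesis
    by (auto simp: KGC_def)
qed

end
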